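(* The element $\Omega = qABC+q^2A^2+q^{-2}B^2+q^2C^2-qA\alpha-q^{-1}B\beta-qC\gamma$ of $\Delta$ is fixed by every element of ${\rm PSL}_2(\mathbb Z)$ under the action in which $\rho$ sends $A\mapsto B$, $B\mapsto C$, $C\mapsto A$, $\alpha\mapsto\beta$, $\beta\mapsto\gamma$, $\gamma\mapsto\alpha$ and $\sigma$ sends $A\mapsto B$, $B\mapsto A$, $C\mapsto C+\frac{AB-BA}{q-q^{-1}}$, $\alpha\mapsto\beta$, $\beta\mapsto\alpha$, $\gamma\mapsto\gamma$.
   Context: Let $\mathbb F$ be a field and fix a nonzero $q\in\mathbb F$ with $q^4\neq 1$. The universal Askey--Wilson algebra $\Delta$ is the associative $\mathbb F$-algebra with 1 with generators $A,B,C$ subject to the relations that each of $A+\frac{qBC-q^{-1}CB}{q^2-q^{-2}}$, $B+\frac{qCA-q^{-1}AC}{q^2-q^{-2}}$, $C+\frac{qAB-q^{-1}BA}{q^2-q^{-2}}$ is central; $\alpha,\beta,\gamma$ denote these three central elements (in order) each multiplied by $q+q^{-1}$. ${\rm PSL}_2(\mathbb Z)$ is presented by generators $\rho,\sigma$ with relations $\rho^3=\sigma^2=1$, and the stated assignments define an action of ${\rm PSL}_2(\mathbb Z)$ on $\Delta$ by automorphisms. *)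

theory Defs
  imports Main
begin

text \<open>An F-algebra with 1 is modelled as a ring with 1 of type 'r together with a
unital ring homomorphism e from the field F into the centre of 'r (scalar c acts as
multiplication by e c).\<close>

definition alg_embedding :: "('f::field \<Rightarrow> 'r::ring_1) \<Rightarrow> bool" where
  "alg_embedding e \<longleftrightarrow>
     (\<forall>a b. e (a + b) = e a + e b) \<and> (\<forall>a b. e (a * b) = e a * e b) \<and> e 1 = 1 \<and>
     (\<forall>a x. e a * x = x * e a)"

definition central :: "'r::ring_1 \<Rightarrow> bool" where
  "central z \<longleftrightarrow> (\<forall>y. z * y = y * z)"

definition aw_elt :: "('f::field \<Rightarrow> 'r::ring_1) \<Rightarrow> 'f \<Rightarrow> 'r \<Rightarrow> 'r \<Rightarrow> 'r \<Rightarrow> 'r" where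
  "aw_elt e q X Y Z = X + e (inverse (q^2 - inverse q ^ 2)) * (e q * Y * Z - e (inverse q) * Z * Y)"

definition aw_alpha :: "('f::field \<Rightarrow> 'r::ring_1) \<Rightarrow> 'f \<Rightarrow> 'r \<Rightarrow> 'r \<Rightarrow> 'r \<Rightarrow> 'r" where
  "aw_alpha e q A B C = e (q + inverse q) * aw_elt e q A B C"
definition aw_beta :: "('f::field \<Rightarrow> 'r::ring_1) \<Rightarrow> 'f \<Rightarrow> 'r \<Rightarrow> 'r \<Rightarrow> 'r \<Rightarrow> 'r" where
  "aw_beta e q A B C = e (q + inverse q) * aw_elt e q B C A"
definition aw_gamma :: "('f::field \<Rightarrow> 'r::ring_1) \<Rightarrow> 'f \<Rightarrow> 'r \<Rightarrow> 'r \<Rightarrow> 'r \<Rightarrow> 'r" where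
  "aw_gamma e q A B C = e (q + inverse q) * aw_elt e q C A B"

text \<open>(A,B,C) satisfy the defining relations of the universal Askey--Wilson algebra.\<close>
definition aw_relations :: "('f::field \<Rightarrow> 'r::ring_1) \<Rightarrow> 'f \<Rightarrow> 'r \<Rightarrow> 'r \<Rightarrow> 'r \<Rightarrow> bool" where
  "aw_relations e q A B C \<longleftrightarrow>
     central (aw_elt e q A B C) \<and> central (aw_elt e q B C A) \<and> central (aw_elt e q C A B)"

definition aw_Omega :: "('f::field \<Rightarrow> 'r::ring_1) \<Rightarrow> 'f \<Rightarrow> 'r \<Rightarrow> 'r \<Rightarrow> 'r \<Rightarrow> 'r" where
  "aw_Omega e q A B C =
     e q * A * B * C + e (q^2) * A^2 + e (inverse q ^ 2) * B^2 + e (q^2) * C^2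
     - e q * A * aw_alpha e q A B C - e (inverse q) * B * aw_beta e q A B C
     - e q * C * aw_gamma e q A B C"

datatype psl_gen = Rho | Sigma

fun psl_step :: "('f::field \<Rightarrow> 'r::ring_1) \<Rightarrow> 'f \<Rightarrow> psl_gen \<Rightarrow> 'r \<times> 'r \<times> 'r \<Rightarrow> 'r \<times> 'r \<times> 'r" where
  "psl_step e q Rho (A, B, C) = (B, C, A)"
| "psl_step e q Sigma (A, B, C) = (B, A, C + e (inverse (q - inverse q)) * (A * B - B * A))"

text \<open>The images of (A,B,C) under the group element g1 g2 ... gn (word w), as
non-commutative polynomials evaluated at the triple t: the image of X under x w is
the image of X under w evaluated at the images under x.\<close>
fun psl_act :: "('f::field \<Rightarrow> 'r::ring_1) \<Rightarrow> 'f \<Rightarrow> psl_gen list \<Rightarrow> 'r \<times> 'r \<times> 'r \<Rightarrow> 'r \<times> 'r \<times> 'r" where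
  "psl_act e q [] t = t"
| "psl_act e q (x # w) t = psl_act e q w (psl_step e q x t)"

end

theory Submission
  imports Defs
begin

text \<open>Orient the three defining relations of \<open>\<Delta>\<close> as rewrite rules
\<open>AB \<rightarrow> BA\<close>, \<open>AC \<rightarrow> CA\<close>, \<open>BC \<rightarrow> CB\<close> (modulo central and lower-order terms), and
move scalars and the central elements \<open>a = \<alpha>/(q+q\<^sup>-\<^sup>1)\<close>, \<open>b\<close>, \<open>c\<close> to the
front.  This brings every element to a normal form, so the identities needed reduce to
cancellation of normal forms: invariance of \<open>\<Omega>\<close> under \<open>\<rho>\<close>, and under \<open>\<sigma>\<close> both
the fact that \<open>\<sigma>\<close> permutes \<open>a, b, c\<close> (so that it preserves the relations) and the
invariance of \<open>\<Omega>\<close>.  For \<open>\<sigma>\<close> the division by \<open>q - q\<^sup>-\<^sup>1\<close> disappears once the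
relation for \<open>AB\<close> is used: \<open>\<sigma>(C) = q\<^sup>-\<^sup>1(q+q\<^sup>-\<^sup>1)c - q\<^sup>-\<^sup>2C - q\<^sup>-\<^sup>1BA\<close>.\<close>

lemma mult_right_eq: "x * y = r \<Longrightarrow> x * (y * w) = r * (w :: 'a :: semigroup_mult)"
  by (simp flip: mult.assoc)

lemma central_commute:
  assumes "central z"
  shows "x * z = z * x" "x * (z * y) = z * (x * y)"
  using assms unfolding central_def by (simp, metis mult.assoc)

locale scalar_embedding =
  fixes e :: "'a::field \<Rightarrow> 'b::ring_1"
  assumes alg_embedding: "alg_embedding e"
begin

lemma embed_add: "e (x + y) = e x + e y"
  and embed_mult: "e (x * y) = e x * e y"
  and embed_1: "e 1 = 1"
  and embed_commute: "e x * z = z * e x"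
  using alg_embedding unfolding alg_embedding_def by blast+

lemma embed_0: "e 0 = 0"
  by (metis add.right_neutral add_left_cancel embed_add)

lemma embed_minus: "e (- x) = - e x"
  by (metis add.right_inverse embed_0 embed_add neg_eq_iff_add_eq_0)

lemma embed_diff: "e (x - y) = e x - e y"
  by (simp only: diff_conv_add_uminus embed_add embed_minus)

lemma embed_power: "e (x ^ n) = e x ^ n"
  by (induction n) (simp_all add: embed_1 embed_mult)

lemma embed_commute_left: "z * (e x * y) = e x * (z * y)"
  by (metis mult.assoc embed_commute)

lemma embed_inverse_left: "x \<noteq> 0 \<Longrightarrow> e (inverse x) * (e x * y) = y"
  by (simp add: embed_1 flip: mult.assoc embed_mult)

lemmas embed_simps = embed_add embed_diff embed_mult embed_power power2_eq_square embed_1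

end

locale aw_parameters = scalar_embedding e for e :: "'a::field \<Rightarrow> 'b::ring_1" +
  fixes q :: 'a
  assumes q_nonzero: "q \<noteq> 0" and q4_neq_1: "q ^ 4 \<noteq> 1"
begin

abbreviation t :: 'a where "t \<equiv> q^2 - inverse q ^ 2"

lemma t_nonzero: "t \<noteq> 0"
proof -
  have "q^2 * inverse q ^ 2 = 1" using q_nonzero by (simp flip: power_mult_distrib)
  then have "q^2 * t = q^4 - 1" by (simp add: right_diff_distrib flip: power_add)
  then show ?thesis using q4_neq_1 by auto
qed

lemma t_factor: "t = (q + inverse q) * (q - inverse q)"
  by (simp add: algebra_simps power2_eq_square)

lemma sigma_scalars:
  "inverse (q - inverse q) * (inverse q ^ 2 - 1) = - inverse q"
  "inverse (q - inverse q) * (inverse q * t) = inverse q * (q + inverse q)"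
proof -
  have nz: "q - inverse q \<noteq> 0" using t_nonzero t_factor by auto
  have "inverse q ^ 2 - 1 = - inverse q * (q - inverse q)"
    using q_nonzero by (simp add: algebra_simps power2_eq_square)
  then show "inverse (q - inverse q) * (inverse q ^ 2 - 1) = - inverse q" using nz by simp
  show "inverse (q - inverse q) * (inverse q * t) = inverse q * (q + inverse q)"
    using nz by (simp add: t_factor)
qed

lemma embed_q_inverse_left: "e q * (e (inverse q) * x) = x" "e (inverse q) * (e q * x) = x"
  using embed_inverse_left[of q x] embed_inverse_left[of "inverse q" x] q_nonzero by simp_all

lemma aw_elt_relation:
  "e q * (Y * Z) = e (inverse q) * (Z * Y) + e t * aw_elt e q X Y Z - e t * X"
proof -
  have "e t * e (inverse t) = 1"
    using t_nonzero by (simp flip: embed_mult add: embed_1)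
  then show ?thesis
    by (simp add: aw_elt_def algebra_simps flip: mult.assoc)
qed

lemma aw_elt_eqI:
  assumes "e t * X + e q * (Y * Z) - e (inverse q) * (Z * Y) = e t * w"
  shows "aw_elt e q X Y Z = w"
proof -
  have inv: "e (inverse t) * (e t * x) = x" for x
    using embed_inverse_left[OF t_nonzero] .
  have "aw_elt e q X Y Z = e (inverse t) * (e t * X + e q * (Y * Z) - e (inverse q) * (Z * Y))"
    by (simp add: aw_elt_def inv algebra_simps)
  then show ?thesis by (simp add: assms inv)
qed

end

locale aw_triple = aw_parameters e q for e :: "'a::field \<Rightarrow> 'b::ring_1" and q +
  fixes A B C :: 'b
  assumes aw_relations: "aw_relations e q A B C"
begin

definition a :: 'b where "a = aw_elt e q A B C"
definition b :: 'b where "b = aw_elt e q B C A"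
definition c :: 'b where "c = aw_elt e q C A B"

lemma central_abc: "central a" "central b" "central c"
  using aw_relations by (simp_all add: aw_relations_def a_def b_def c_def)

lemma order_AB: "A * B = e (inverse q ^ 2) * (B * A) + e (inverse q * t) * (c - C)"
proof -
  have "e (inverse q) * (e q * (A * B)) = e (inverse q) * (e (inverse q) * (B * A) + e t * c - e t * C)"
    unfolding c_def by (rule arg_cong[OF aw_elt_relation])
  then show ?thesis by (simp only: embed_simps) (simp add: algebra_simps embed_q_inverse_left)
qed

lemma order_AC: "A * C = e (q ^ 2) * (C * A) - e (q * t) * (b - B)"
proof -
  have "e q * (e (inverse q) * (A * C)) = e q * (e q * (C * A) - e t * b + e t * B)"
    using aw_elt_relation[where X=B and Y=C and Z=A] unfolding b_def by (simp add: algebra_simps)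
  then show ?thesis by (simp only: embed_simps) (simp add: algebra_simps embed_q_inverse_left)
qed

lemma order_BC: "B * C = e (inverse q ^ 2) * (C * B) + e (inverse q * t) * (a - A)"
proof -
  have "e (inverse q) * (e q * (B * C)) = e (inverse q) * (e (inverse q) * (C * B) + e t * a - e t * A)"
    unfolding a_def by (rule arg_cong[OF aw_elt_relation])
  then show ?thesis by (simp only: embed_simps) (simp add: algebra_simps embed_q_inverse_left)
qed

text \<open>The membership premises always hold; they only keep the simplifier from
commuting two scalars, or two central elements, back and forth.\<close>

lemma embed_moves_left:
  assumes "x \<in> {A, B, C, a, b, c}"
  shows "x * e k = e k * x" "x * (e k * y) = e k * (x * y)"
  by (metis embed_commute, rule embed_commute_left)

lemma central_moves_left:
  "x \<in> {A, B, C} \<Longrightarrow> x * a = a * x" "x \<in> {A, B, C} \<Longrightarrow> x * (a * y) = a * (x * y)"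
  "x \<in> {A, B, C, a} \<Longrightarrow> x * b = b * x" "x \<in> {A, B, C, a} \<Longrightarrow> x * (b * y) = b * (x * y)"
  "x \<in> {A, B, C, a, b} \<Longrightarrow> x * c = c * x" "x \<in> {A, B, C, a, b} \<Longrightarrow> x * (c * y) = c * (x * y)"
  using central_commute[OF central_abc(1)] central_commute[OF central_abc(2)]
    central_commute[OF central_abc(3)] by blast+

text \<open>After \<open>embed_simps\<close> every scalar is a product of \<open>e q\<close> and \<open>e (inverse q)\<close>,
and these rules sort each word in \<open>A, B, C\<close> into the order \<open>C\<dots>B\<dots>A\<close>.\<close>

lemmas normal_ordering = algebra_simps
  order_AB[unfolded embed_simps] order_AB[unfolded embed_simps, THEN mult_right_eq]
  order_AC[unfolded embed_simps] order_AC[unfolded embed_simps, THEN mult_right_eq]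
  order_BC[unfolded embed_simps] order_BC[unfolded embed_simps, THEN mult_right_eq]
  embed_moves_left central_moves_left embed_q_inverse_left

lemma sigma_C_eq:
  "C + e (inverse (q - inverse q)) * (A * B - B * A)
     = e (inverse q * (q + inverse q)) * c - e (inverse q ^ 2) * C - e (inverse q) * (B * A)"
proof -
  let ?k = "inverse (q - inverse q)"
  have "e ?k * (A * B - B * A) = e ?k * (e (inverse q ^ 2 - 1) * (B * A) + e (inverse q * t) * (c - C))"
    by (simp add: order_AB embed_diff embed_1 algebra_simps)
  also have "\<dots> = e (?k * (inverse q ^ 2 - 1)) * (B * A) + e (?k * (inverse q * t)) * (c - C)"
    by (simp only: embed_mult distrib_left mult.assoc)
  also have "\<dots> = - e (inverse q) * (B * A) + e (inverse q * (q + inverse q)) * (c - C)"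
    by (simp only: sigma_scalars embed_minus)
  finally show ?thesis
    by (simp only: embed_simps) (simp add: algebra_simps embed_q_inverse_left)
qed

lemma sigma_aw_elt:
  "aw_elt e q B A (C + e (inverse (q - inverse q)) * (A * B - B * A)) = b"
  "aw_elt e q A (C + e (inverse (q - inverse q)) * (A * B - B * A)) B = a"
  "aw_elt e q (C + e (inverse (q - inverse q)) * (A * B - B * A)) B A = c"
  by (rule aw_elt_eqI, simp only: sigma_C_eq embed_simps, simp add: normal_ordering)+

lemma rho_Omega: "aw_Omega e q B C A = aw_Omega e q A B C"
  unfolding aw_Omega_def aw_alpha_def aw_beta_def aw_gamma_def
    a_def[symmetric] b_def[symmetric] c_def[symmetric]
  by (simp only: embed_simps) (simp add: normal_ordering)

lemma sigma_Omega:
  "aw_Omega e q B A (C + e (inverse (q - inverse q)) * (A * B - B * A)) = aw_Omega e q A B C"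
  unfolding aw_Omega_def aw_alpha_def aw_beta_def aw_gamma_def sigma_aw_elt
    a_def[symmetric] b_def[symmetric] c_def[symmetric]
  by (simp only: sigma_C_eq embed_simps) (simp add: normal_ordering)

lemma psl_step_invariant:
  assumes "psl_step e q x (A, B, C) = (A', B', C')"
  shows "aw_relations e q A' B' C' \<and> aw_Omega e q A' B' C' = aw_Omega e q A B C"
proof (cases x)
  case Rho
  then show ?thesis using assms aw_relations rho_Omega by (auto simp: aw_relations_def)
next
  case Sigma
  then show ?thesis using assms central_abc sigma_aw_elt sigma_Omega by (auto simp: aw_relations_def)
qed

end

theorem theorem6p4:
  fixes e :: "'f::field \<Rightarrow> 'r::ring_1" and q :: 'f and A B C :: 'r
    and w :: "psl_gen list"
  assumes "alg_embedding e" and "q \<noteq> 0" and "q ^ 4 \<noteq> 1"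
    and "aw_relations e q A B C"
  shows "(case psl_act e q w (A, B, C) of (A', B', C') \<Rightarrow> aw_Omega e q A' B' C')
           = aw_Omega e q A B C"
  using assms(4)
proof (induction w arbitrary: A B C)
  case Nil
  then show ?case by simp
next
  case (Cons x w)
  obtain A' B' C' where step: "psl_step e q x (A, B, C) = (A', B', C')"
    by (cases "psl_step e q x (A, B, C)") blast
  interpret aw_triple e q A B C
    using assms(1-3) Cons.prems by unfold_locales
  show ?case using Cons.IH[of A' B' C'] psl_step_invariant[OF step] step by simp
qed

end
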